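(* Let $z\in\mathbb{R}_{\ge0}^s$ with $\sum_j z_j>0$, $\eta>0$, and indices $k,k'$ with $0<z_k<z_{k'}$. Then $\eta\frac{\partial\mathcal{H}}{\partial z_k}(z)>\eta\frac{\partial\mathcal{H}}{\partial z_{k'}}(z)$. Consequently, with $\tilde z_j=\max\big(z_j-\eta\frac{\partial\mathcal{H}}{\partial z_j}(z),0\big)$, mass order is preserved, $\tilde z_k\le\tilde z_{k'}$, and the unclipped gap widens: $\big(z_{k'}-\eta\frac{\partial\mathcal{H}}{\partial z_{k'}}(z)\big)-\big(z_k-\eta\frac{\partial\mathcal{H}}{\partial z_k}(z)\big)>z_{k'}-z_k$.
   Context: $\mathcal{H}(z)=-\sum_i \frac{z_i}{\sum_j z_j}\log\frac{z_i}{\sum_j z_j}$ with $0\log0=0$; $\frac{\partial\mathcal{H}}{\partial z_j}$ is the partial derivative (for $z_j>0$). *)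

theory Defs
  imports "HOL-Analysis.Analysis"
begin

definition xlogx :: "real \<Rightarrow> real" where
  "xlogx p = (if p = 0 then 0 else p * ln p)"

definition entropyH :: "real ^ 's \<Rightarrow> real" where
  "entropyH z = - (\<Sum>i\<in>UNIV. xlogx (z $ i / (\<Sum>j\<in>UNIV. z $ j)))"

definition partialH :: "real ^ 's \<Rightarrow> 's \<Rightarrow> real" where
  "partialH z j = deriv (\<lambda>t. entropyH (\<chi> i. if i = j then t else z $ i)) (z $ j)"

end

theory Submission
  imports Defs
begin

text \<open>Writing \<open>S = \<Sum>\<^sub>i z\<^sub>i\<close>, one has \<open>H(z) = ln S - (\<Sum>\<^sub>i z\<^sub>i ln z\<^sub>i) / S\<close>, hence
  \<open>\<partial>H/\<partial>z\<^sub>j = ((\<Sum>\<^sub>i z\<^sub>i ln z\<^sub>i) / S - ln z\<^sub>j) / S\<close> wherever \<open>z\<^sub>j > 0\<close>.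
  The partial derivative is therefore strictly decreasing in \<open>z\<^sub>j\<close>; scaling by \<open>\<eta> > 0\<close> and
  subtracting from \<open>z\<close> only widens the gap between a smaller and a larger coordinate.\<close>

lemma xlogx_divide:
  assumes "x \<ge> 0" and "S > 0"
  shows "xlogx (x / S) = (xlogx x - x * ln S) / S"
  using assms by (cases "x = 0") (simp_all add: xlogx_def ln_div field_simps)

lemma entropyH_eq:
  fixes w :: "real ^ 's"
  assumes nonneg: "\<And>i. w $ i \<ge> 0" and sum_pos: "(\<Sum>j\<in>UNIV. w $ j) > 0"
  shows "entropyH w = ln (\<Sum>j\<in>UNIV. w $ j) - (\<Sum>i\<in>UNIV. xlogx (w $ i)) / (\<Sum>j\<in>UNIV. w $ j)"
proof -
  define S where "S = (\<Sum>j\<in>UNIV. w $ j)"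
  have "(\<Sum>i\<in>UNIV. xlogx (w $ i / S)) = ((\<Sum>i\<in>UNIV. xlogx (w $ i)) - S * ln S) / S"
    using nonneg sum_pos
    by (simp add: S_def xlogx_divide sum_divide_distrib[symmetric] sum_subtractf sum_distrib_right)
  also have "\<dots> = (\<Sum>i\<in>UNIV. xlogx (w $ i)) / S - ln S"
    using sum_pos by (simp add: S_def diff_divide_distrib)
  finally show ?thesis unfolding entropyH_def S_def by simp
qed

lemma entropyH_update_eq:
  fixes z :: "real ^ 's"
  assumes nonneg: "\<And>i. i \<noteq> j \<Longrightarrow> z $ i \<ge> 0" and t_pos: "t > 0"
  defines "A \<equiv> \<Sum>i\<in>UNIV - {j}. z $ i" and "B \<equiv> \<Sum>i\<in>UNIV - {j}. xlogx (z $ i)"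
  shows "entropyH (\<chi> i. if i = j then t else z $ i) = ln (A + t) - (B + t * ln t) / (A + t)"
proof -
  let ?w = "(\<chi> i. if i = j then t else z $ i) :: real ^ 's"
  have "A \<ge> 0"
    unfolding A_def using nonneg by (intro sum_nonneg) auto
  have sum_w: "(\<Sum>i\<in>UNIV. ?w $ i) = A + t"
    unfolding A_def by (simp add: sum.remove[of UNIV j] add.commute)
  have "(\<Sum>i\<in>UNIV. xlogx (?w $ i)) = xlogx t + (\<Sum>i\<in>UNIV - {j}. xlogx (?w $ i))"
    by (simp add: sum.remove[of UNIV j])
  moreover have "(\<Sum>i\<in>UNIV - {j}. xlogx (?w $ i)) = B"
    unfolding B_def by (rule sum.cong) auto
  ultimately have sum_xlogx_w: "(\<Sum>i\<in>UNIV. xlogx (?w $ i)) = B + t * ln t"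
    using t_pos by (simp add: xlogx_def add.commute)
  have "\<And>i. ?w $ i \<ge> 0" using nonneg t_pos by simp
  from entropyH_eq[of ?w, OF this] show ?thesis
    unfolding sum_w sum_xlogx_w using \<open>A \<ge> 0\<close> t_pos by simp
qed

lemma has_real_derivative_entropy_slice:
  fixes A B t :: real
  assumes "A \<ge> 0" and "t > 0"
  shows "((\<lambda>s. ln (A + s) - (B + s * ln s) / (A + s)) has_real_derivative
           ((B + t * ln t) / (A + t) - ln t) / (A + t)) (at t)"
proof -
  have "1 / T - ((l + 1) * T - L) / T\<^sup>2 = (L / T - l) / T" if "T \<noteq> 0" for T l L :: real
    using that by (simp add: power2_eq_square field_simps)
  then have simplified: "1 / (A + t) - ((ln t + 1) * (A + t) - (B + t * ln t)) / (A + t)\<^sup>2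
      = ((B + t * ln t) / (A + t) - ln t) / (A + t)"
    using assms by simp
  have "((\<lambda>s. ln (A + s) - (B + s * ln s) / (A + s)) has_real_derivative
          1 / (A + t) - ((ln t + 1) * (A + t) - (B + t * ln t)) / (A + t)\<^sup>2) (at t)"
    using assms by (auto intro!: derivative_eq_intros simp: power2_eq_square field_simps)
  then show ?thesis unfolding simplified .
qed

lemma partialH_eq:
  fixes z :: "real ^ 's"
  assumes nonneg: "\<And>i. z $ i \<ge> 0" and pos: "z $ j > 0"
  shows "partialH z j =
    ((\<Sum>i\<in>UNIV. xlogx (z $ i)) / (\<Sum>i\<in>UNIV. z $ i) - ln (z $ j)) / (\<Sum>i\<in>UNIV. z $ i)"
proof -
  define A where "A = (\<Sum>i\<in>UNIV - {j}. z $ i)"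
  define B where "B = (\<Sum>i\<in>UNIV - {j}. xlogx (z $ i))"
  have "A \<ge> 0"
    unfolding A_def using nonneg by (intro sum_nonneg) auto
  from has_real_derivative_entropy_slice[OF this pos, of B]
  have "((\<lambda>t. entropyH (\<chi> i. if i = j then t else z $ i)) has_real_derivative
          ((B + z $ j * ln (z $ j)) / (A + z $ j) - ln (z $ j)) / (A + z $ j)) (at (z $ j))"
    by (rule has_field_derivative_transform_within_open[where S = "{0<..}"])
       (use pos nonneg in \<open>auto simp: A_def B_def entropyH_update_eq\<close>)
  then have "partialH z j = ((B + z $ j * ln (z $ j)) / (A + z $ j) - ln (z $ j)) / (A + z $ j)"
    unfolding partialH_def by (rule DERIV_imp_deriv)
  moreover have "(\<Sum>i\<in>UNIV. z $ i) = A + z $ j"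
    unfolding A_def by (simp add: sum.remove[of UNIV j] add.commute)
  moreover have "(\<Sum>i\<in>UNIV. xlogx (z $ i)) = B + z $ j * ln (z $ j)"
    unfolding B_def using pos by (simp add: sum.remove[of UNIV j] add.commute xlogx_def)
  ultimately show ?thesis by simp
qed

lemma partialH_strict_antimono:
  fixes z :: "real ^ 's"
  assumes nonneg: "\<And>i. z $ i \<ge> 0" and pos: "0 < z $ k" and less: "z $ k < z $ k'"
  shows "partialH z k' < partialH z k"
proof -
  define S where "S = (\<Sum>i\<in>UNIV. z $ i)"
  define C where "C = (\<Sum>i\<in>UNIV. xlogx (z $ i)) / S"
  have "S \<ge> z $ k"
    unfolding S_def using nonneg by (intro member_le_sum) auto
  then have "S > 0" using pos by simp
  moreover have "ln (z $ k) < ln (z $ k')" using pos less by simp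
  ultimately have "(C - ln (z $ k')) / S < (C - ln (z $ k)) / S"
    by (simp add: divide_strict_right_mono)
  then show ?thesis
    using partialH_eq[OF nonneg, of k] partialH_eq[OF nonneg, of k'] pos less
    unfolding C_def S_def by simp
qed

theorem corollary4:
  fixes z :: "real ^ 's" and \<eta> :: real and k k' :: 's
  assumes nonneg: "\<And>j. z $ j \<ge> 0"
    and sum_pos: "(\<Sum>j\<in>UNIV. z $ j) > 0"
    and eta_pos: "\<eta> > 0"
    and zk_pos: "0 < z $ k"
    and zk_lt: "z $ k < z $ k'"
  shows "\<eta> * partialH z k > \<eta> * partialH z k'
         \<and> max (z $ k - \<eta> * partialH z k) 0 \<le> max (z $ k' - \<eta> * partialH z k') 0
         \<and> (z $ k' - \<eta> * partialH z k') - (z $ k - \<eta> * partialH z k) > z $ k' - z $ k"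
proof -
  have "\<eta> * partialH z k' < \<eta> * partialH z k"
    using partialH_strict_antimono[OF nonneg zk_pos zk_lt] eta_pos by simp
  moreover from this have "(z $ k' - \<eta> * partialH z k') - (z $ k - \<eta> * partialH z k) > z $ k' - z $ k"
    by simp
  moreover from this zk_lt have "max (z $ k - \<eta> * partialH z k) 0 \<le> max (z $ k' - \<eta> * partialH z k') 0"
    by simp
  ultimately show ?thesis by blast
qed

end
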